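(* Let $n,m\ge 1$ be integers and consider the shifting-checkers game with $n$ black and $m$ white checkers (defined in the context). Every optimal solution of the game (i.e. every move sequence from the initial configuration to the final configuration using the minimum possible number of moves) uses only the following four kinds of moves: (1) a black checker slides one position to the right into the vacancy; (2) a white checker slides one position to the left into the vacancy; (3) a black checker jumps to the right over an adjacent white checker into the vacancy; (4) a white checker jumps to the left over an adjacent black checker into the vacancy.
   Context: The game: there are $n+m+1$ positions in a row, numbered $1,\dots,n+m+1$. A configuration assigns to each position a black checker, a white checker, or nothing, with exactly one empty position (the vacancy). Writing $b$ for black, $w$ for white and $O$ for the vacancy, the initial configuration is $b^nOw^m$ (blacks at $1,\dots,n$, vacancy at $n+1$, whites at $n+2,\dots,n+m+1$) and the final configuration is $w^mOb^n$. A move is either a slide (a checker at a position adjacent to the vacancy moves into the vacancy) or a jump (a checker at distance two from the vacancy jumps over the checker between them into the vacancy); moves in either direction and over checkers of either colour are permitted. A solution is a finite sequence of moves transforming the initial configuration into the final one; it is optimal if no solution has fewer moves. *)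

theory Defs
  imports Main
begin

datatype cell = Black | White | Empty

type_synonym config = "cell list"

text \<open>Positions 1..n+m+1 of the paper are list indices 0..n+m.\<close>

definition initial :: "nat \<Rightarrow> nat \<Rightarrow> config" where
  "initial n m = replicate n Black @ [Empty] @ replicate m White"

definition final :: "nat \<Rightarrow> nat \<Rightarrow> config" where
  "final n m = replicate m White @ [Empty] @ replicate n Black"

text \<open>A move is a pair (i, j): the checker at position i moves into the vacancy at position j.\<close>
type_synonym move = "nat \<times> nat"

definition dist :: "nat \<Rightarrow> nat \<Rightarrow> nat" where
  "dist i j = (if i \<le> j then j - i else i - j)"

definition valid_move :: "config \<Rightarrow> move \<Rightarrow> bool" where
  "valid_move c mv = (case mv of (i, j) \<Rightarrow>
     i < length c \<and> j < length c \<and> c ! j = Empty \<and> c ! i \<noteq> Empty \<and>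
     (dist i j = 1 \<or> (dist i j = 2 \<and> c ! ((i + j) div 2) \<noteq> Empty)))"

definition apply_move :: "config \<Rightarrow> move \<Rightarrow> config" where
  "apply_move c mv = (case mv of (i, j) \<Rightarrow> c[j := c ! i, i := Empty])"

fun legal_from :: "config \<Rightarrow> move list \<Rightarrow> bool" where
  "legal_from c [] = True"
| "legal_from c (mv # mvs) = (valid_move c mv \<and> legal_from (apply_move c mv) mvs)"

fun run :: "config \<Rightarrow> move list \<Rightarrow> config" where
  "run c [] = c"
| "run c (mv # mvs) = run (apply_move c mv) mvs"

definition solution :: "nat \<Rightarrow> nat \<Rightarrow> move list \<Rightarrow> bool" where
  "solution n m mvs = (legal_from (initial n m) mvs \<and> run (initial n m) mvs = final n m)"

definition optimal_solution :: "nat \<Rightarrow> nat \<Rightarrow> move list \<Rightarrow> bool" where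
  "optimal_solution n m mvs =
     (solution n m mvs \<and> (\<forall>mvs'. solution n m mvs' \<longrightarrow> length mvs \<le> length mvs'))"

definition allowed_kind :: "config \<Rightarrow> move \<Rightarrow> bool" where
  "allowed_kind c mv = (case mv of (i, j) \<Rightarrow>
       (c ! i = Black \<and> j = i + 1)
     \<or> (c ! i = White \<and> i = j + 1)
     \<or> (c ! i = Black \<and> j = i + 2 \<and> c ! (i + 1) = White)
     \<or> (c ! i = White \<and> i = j + 2 \<and> c ! (j + 1) = Black))"

fun all_moves_allowed :: "config \<Rightarrow> move list \<Rightarrow> bool" where
  "all_moves_allowed c [] = True"
| "all_moves_allowed c (mv # mvs) = (allowed_kind c mv \<and> all_moves_allowed (apply_move c mv) mvs)"

end

theory Submission
  imports Defs "HOL-Library.Sublist"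
begin

text \<open>
  Give a black checker charge \<open>1\<close> and a white one charge \<open>-1\<close>, let the moment of a
  configuration be the sum of position times charge, and count its inversions, the black-white
  pairs still in their initial order. Inspecting the four shapes of a move shows that the change
  of \<open>moment - 2 * inversions\<close> plus three times the indicator of a slide is at most \<open>4\<close>, with
  equality exactly for the four allowed kinds. Over a solution with \<open>S\<close> slides these changes add
  up to \<open>3 S + 4 n m + n + m\<close>.

  Every solution has \<open>S \<ge> n + m\<close>: slides keep the order of the checkers and jumps permute them
  by adjacent transpositions, while \<open>S\<close> plus the number of checkers to the right of the vacancy
  keeps its parity; together these bound \<open>S\<close> from below along suffixes of the checker sequence.
  On the other hand the zigzag solution uses only allowed moves, each of which raises
  \<open>moment + inversions\<close> by one, so it has \<open>n m + n + m\<close> moves. An optimal solution of length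
  \<open>L\<close> thus satisfies \<open>4 L \<le> 4 (n m + n + m) \<le> 3 S + 4 n m + n + m\<close>, so every move attains
  the bound and is of an allowed kind.
\<close>

lemma apply_move_slide_right:
  "apply_move (a @ X # Y # b) (length a, Suc (length a)) = a @ Empty # X # b"
  by (simp add: apply_move_def list_update_append nth_append)

lemma apply_move_slide_left:
  "apply_move (a @ Y # X # b) (Suc (length a), length a) = a @ X # Empty # b"
  by (simp add: apply_move_def list_update_append nth_append)

lemma apply_move_jump_right:
  "apply_move (a @ X # Z # Y # b) (length a, Suc (Suc (length a))) = a @ Empty # Z # X # b"
  by (simp add: apply_move_def list_update_append nth_append)

lemma apply_move_jump_left:
  "apply_move (a @ Y # Z # X # b) (Suc (Suc (length a)), length a) = a @ X # Z # Empty # b"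
  by (simp add: apply_move_def list_update_append nth_append)

lemma valid_move_cases:
  assumes "valid_move c (i, j)"
  obtains
    (slide_right) a X b where "X \<noteq> Empty" "c = a @ X # Empty # b"
      "(i, j) = (length a, Suc (length a))" "apply_move c (i, j) = a @ Empty # X # b"
  | (slide_left) a X b where "X \<noteq> Empty" "c = a @ Empty # X # b"
      "(i, j) = (Suc (length a), length a)" "apply_move c (i, j) = a @ X # Empty # b"
  | (jump_right) a X Z b where "X \<noteq> Empty" "Z \<noteq> Empty" "c = a @ X # Z # Empty # b"
      "(i, j) = (length a, Suc (Suc (length a)))" "apply_move c (i, j) = a @ Empty # Z # X # b"
  | (jump_left) a X Z b where "X \<noteq> Empty" "Z \<noteq> Empty" "c = a @ Empty # Z # X # b"
      "(i, j) = (Suc (Suc (length a)), length a)" "apply_move c (i, j) = a @ X # Z # Empty # b"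
proof -
  have ij: "i < length c" "j < length c" and cells: "c ! j = Empty" "c ! i \<noteq> Empty"
    and "dist i j = 1 \<or> dist i j = 2 \<and> c ! ((i + j) div 2) \<noteq> Empty"
    using assms by (auto simp: valid_move_def)
  then consider "j = Suc i" | "i = Suc j" | "j = Suc (Suc i)" "c ! Suc i \<noteq> Empty"
    | "i = Suc (Suc j)" "c ! Suc j \<noteq> Empty"
    unfolding dist_def by (cases i j rule: le_cases) (auto dest!: le_Suc_ex split: if_splits)
  then show thesis
  proof cases
    case 1
    then have "c = take i c @ c ! i # c ! j # drop (Suc j) c"
      using ij by (simp add: Cons_nth_drop_Suc)
    then show thesis
      using slide_right[of "c ! i" "take i c"] 1 ij cells
      by (metis apply_move_slide_right length_take min_absorb2 less_imp_le)
  next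
    case 2
    then have "c = take j c @ c ! j # c ! i # drop (Suc i) c"
      using ij by (simp add: Cons_nth_drop_Suc)
    then show thesis
      using slide_left[of "c ! i" "take j c"] 2 ij cells
      by (metis apply_move_slide_left length_take min_absorb2 less_imp_le)
  next
    case 3
    then have "c = take i c @ c ! i # c ! Suc i # c ! j # drop (Suc j) c"
      using ij by (simp add: Cons_nth_drop_Suc)
    then show thesis
      using jump_right[of "c ! i" "c ! Suc i" "take i c"] 3 ij cells
      by (metis apply_move_jump_right length_take min_absorb2 less_imp_le)
  next
    case 4
    then have "c = take j c @ c ! j # c ! Suc j # c ! i # drop (Suc i) c"
      using ij by (simp add: Cons_nth_drop_Suc)
    then show thesis
      using jump_left[of "c ! i" "c ! Suc j" "take j c"] 4 ij cells
      by (metis apply_move_jump_left length_take min_absorb2 less_imp_le)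
  qed
qed

definition charge :: "cell \<Rightarrow> int" where
  "charge x = (case x of Black \<Rightarrow> 1 | White \<Rightarrow> -1 | Empty \<Rightarrow> 0)"

text \<open>The recursion computes \<open>\<Sum>p. p * charge (c ! p)\<close>.\<close>

fun moment :: "config \<Rightarrow> int" where
  "moment [] = 0"
| "moment (x # xs) = moment xs + sum_list (map charge xs)"

fun inversions :: "config \<Rightarrow> nat" where
  "inversions [] = 0"
| "inversions (x # xs) = (if x = Black then count_list xs White else 0) + inversions xs"

lemma moment_append [simp]:
  "moment (xs @ ys) = moment xs + moment ys + int (length xs) * sum_list (map charge ys)"
  by (induction xs) (auto simp: algebra_simps)

lemma inversions_append [simp]:
  "inversions (xs @ ys) = inversions xs + inversions ys + count_list xs Black * count_list ys White"
  by (induction xs) (auto simp: algebra_simps)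

lemma count_list_replicate [simp]:
  "count_list (replicate k x) y = (if x = y then k else 0)"
  by (induction k) auto

definition is_slide :: "move \<Rightarrow> bool" where
  "is_slide mv = (case mv of (i, j) \<Rightarrow> dist i j = 1)"

definition slides :: "move list \<Rightarrow> nat" where
  "slides mvs = length (filter is_slide mvs)"

definition potential :: "config \<Rightarrow> int" where
  "potential c = moment c - 2 * int (inversions c)"

definition progress :: "config \<Rightarrow> int" where
  "progress c = moment c + int (inversions c)"

abbreviation move_gain :: "config \<Rightarrow> move \<Rightarrow> int" where
  "move_gain c mv \<equiv> potential (apply_move c mv) - potential c + 3 * of_bool (is_slide mv)"

lemma valid_move_gain:
  assumes "valid_move c (i, j)"
  shows "move_gain c (i, j) \<le> 4 \<and> (move_gain c (i, j) = 4 \<longrightarrow> allowed_kind c (i, j)) \<and>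
    (allowed_kind c (i, j) \<longrightarrow> progress (apply_move c (i, j)) = progress c + 1)"
  using assms
proof (cases rule: valid_move_cases)
  case (slide_right a X b)
  then show ?thesis
    by (cases X) (simp_all add: potential_def progress_def is_slide_def dist_def
        allowed_kind_def charge_def nth_append)
next
  case (slide_left a X b)
  then show ?thesis
    by (cases X) (simp_all add: potential_def progress_def is_slide_def dist_def
        allowed_kind_def charge_def nth_append)
next
  case (jump_right a X Z b)
  then show ?thesis
    by (cases X; cases Z) (simp_all add: potential_def progress_def is_slide_def dist_def
        allowed_kind_def charge_def nth_append)
next
  case (jump_left a X Z b)
  then show ?thesis
    by (cases X; cases Z) (simp_all add: potential_def progress_def is_slide_def dist_def
        allowed_kind_def charge_def nth_append)
qed

lemma legal_run_gain_le:
  "legal_from c mvs \<Longrightarrow>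
    potential (run c mvs) - potential c + 3 * int (slides mvs) \<le> 4 * int (length mvs)"
proof (induction mvs arbitrary: c)
  case (Cons mv mvs)
  obtain i j where "mv = (i, j)" by fastforce
  with Cons.prems have "move_gain c mv \<le> 4"
    using valid_move_gain by auto
  with Cons show ?case by (fastforce simp: slides_def)
qed (simp add: slides_def)

lemma legal_run_gain_ge_imp_allowed:
  "legal_from c mvs \<Longrightarrow>
    4 * int (length mvs) \<le> potential (run c mvs) - potential c + 3 * int (slides mvs) \<Longrightarrow>
    all_moves_allowed c mvs"
proof (induction mvs arbitrary: c)
  case (Cons mv mvs)
  obtain i j where "mv = (i, j)" by fastforce
  with Cons.prems(1) have "move_gain c mv \<le> 4" "move_gain c mv = 4 \<Longrightarrow> allowed_kind c mv"
    using valid_move_gain by auto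
  moreover have "potential (run (apply_move c mv) mvs) - potential (apply_move c mv)
      + 3 * int (slides mvs) \<le> 4 * int (length mvs)"
    using Cons.prems(1) by (simp add: legal_run_gain_le)
  moreover have "potential (run c (mv # mvs)) - potential c + 3 * int (slides (mv # mvs))
      = move_gain c mv + (potential (run (apply_move c mv) mvs) - potential (apply_move c mv)
      + 3 * int (slides mvs))"
    by (simp add: slides_def)
  ultimately have "allowed_kind c mv"
    and "4 * int (length mvs) \<le> potential (run (apply_move c mv) mvs)
      - potential (apply_move c mv) + 3 * int (slides mvs)"
    using Cons.prems(2) by auto
  with Cons show ?case by simp
qed simp

lemma allowed_run_progress:
  "legal_from c mvs \<Longrightarrow> all_moves_allowed c mvs \<Longrightarrow>
    progress (run c mvs) = progress c + int (length mvs)"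
proof (induction mvs arbitrary: c)
  case (Cons mv mvs)
  obtain i j where "mv = (i, j)" by fastforce
  with Cons.prems have "progress (apply_move c mv) = progress c + 1"
    using valid_move_gain by auto
  with Cons show ?case by simp
qed simp

definition pieces :: "config \<Rightarrow> config" where
  "pieces c = filter (\<lambda>x. x \<noteq> Empty) c"

definition right_of_vacancy :: "config \<Rightarrow> nat" where
  "right_of_vacancy c = length (takeWhile (\<lambda>x. x \<noteq> Empty) (rev c))"

text \<open>
  Here \<open>t\<close> counts the slides made so far. For the suffix of \<open>n\<close> blacks of the final
  configuration the bound reads \<open>n + m \<le> t + 1\<close>, and parity improves it to \<open>n + m \<le> t\<close>.
\<close>

definition slide_bound :: "nat \<Rightarrow> nat \<Rightarrow> config \<Rightarrow> bool" where
  "slide_bound m t ps \<longleftrightarrow> (\<forall>s. suffix s ps \<longrightarrow> Black \<in> set s \<longrightarrow> count_list s White < m \<longrightarrow>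
     count_list s Black + m \<le> t + count_list s White + 1)"

definition slide_invariant :: "nat \<Rightarrow> nat \<Rightarrow> config \<Rightarrow> bool" where
  "slide_invariant m t c \<longleftrightarrow> count_list c Empty = 1 \<and> even (t + m + right_of_vacancy c) \<and>
     slide_bound m t (pieces c)"

lemma pieces_simps [simp]:
  "pieces [] = []" "pieces (x # xs) = (if x = Empty then pieces xs else x # pieces xs)"
  "pieces (xs @ ys) = pieces xs @ pieces ys"
  by (simp_all add: pieces_def)

lemma pieces_id: "Empty \<notin> set xs \<Longrightarrow> pieces xs = xs"
  by (induction xs) auto

lemma length_eq_count_Black_White:
  "Empty \<notin> set xs \<Longrightarrow> length xs = count_list xs Black + count_list xs White"
proof (induction xs)
  case (Cons x xs)
  then show ?case by (cases x) auto
qed simp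

lemma right_of_vacancy_eq: "Empty \<notin> set b \<Longrightarrow> right_of_vacancy (a @ Empty # b) = length b"
  unfolding right_of_vacancy_def by (subst rev_append, simp, subst takeWhile_append2) auto

lemma slide_bound_mono: "slide_bound m t ps \<Longrightarrow> t \<le> t' \<Longrightarrow> slide_bound m t' ps"
  unfolding slide_bound_def by fastforce

lemma slide_bound_swap:
  assumes bound: "slide_bound m t (fa @ X # Z # fb)"
    and parity: "even (t + m + length fb)" and "Empty \<notin> set fb"
  shows "slide_bound m t (fa @ Z # X # fb)"
proof -
  let ?B = "\<lambda>s. count_list s Black" and ?W = "\<lambda>s. count_list s White"
  have old: "?B s + m \<le> t + ?W s + 1"
    if "suffix s (fa @ X # Z # fb)" "Black \<in> set s" "?W s < m" for s
    using bound that unfolding slide_bound_def by blast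
  have new: "?B (X # fb) + m \<le> t + ?W (X # fb) + 1"
    if black: "Black \<in> set (X # fb)" and white: "?W (X # fb) < m"
  proof (cases "X = Black")
    case False
    then show ?thesis
      using old[of fb] that by (auto simp: suffix_def)
  next
    case True
    have "?B fb + m \<le> t + ?W fb + 1"
    proof (cases "?W (X # Z # fb) < m")
      case True
      then show ?thesis
        using old[of "X # Z # fb"] \<open>X = Black\<close> by (auto simp: suffix_def split: if_splits)
    next
      case False
      then have "Z = White" "?W fb + 1 = m"
        using white \<open>X = Black\<close> by (auto split: if_splits)
      then show ?thesis
        using old[of fb] by (cases "Black \<in> set fb") (auto simp: suffix_def count_list_0_iff)
    qed
    \<comment> \<open>Parity excludes equality, so the bound also absorbs the extra black \<open>X\<close>.\<close>
    moreover have "?B fb + m \<noteq> t + ?W fb + 1"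
      using parity length_eq_count_Black_White[OF \<open>Empty \<notin> set fb\<close>] by presburger
    ultimately show ?thesis
      using \<open>X = Black\<close> by simp
  qed
  show ?thesis
    unfolding slide_bound_def
  proof (intro allI impI)
    fix s
    assume "suffix s (fa @ Z # X # fb)" "Black \<in> set s" "?W s < m"
    then consider "suffix s fb" | "s = X # fb" | u where "s = u @ Z # X # fb" "suffix u fa"
      by (auto simp: suffix_append suffix_Cons)
    then show "?B s + m \<le> t + ?W s + 1"
    proof cases
      case 1
      then show ?thesis
        using old \<open>Black \<in> set s\<close> \<open>?W s < m\<close> by (meson suffix_appendI suffix_ConsI)
    next
      case 2
      then show ?thesis
        using new \<open>Black \<in> set s\<close> \<open>?W s < m\<close> by blast
    next
      case 3
      then have "suffix (u @ X # Z # fb) (fa @ X # Z # fb)"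
        by (auto simp: suffix_def)
      then show ?thesis
        using old[of "u @ X # Z # fb"] 3 \<open>Black \<in> set s\<close> \<open>?W s < m\<close> by auto
    qed
  qed
qed

lemma single_vacancy_split:
  "count_list (a @ Empty # b) Empty = 1 \<Longrightarrow> Empty \<notin> set a \<and> Empty \<notin> set b"
  by (simp add: count_list_0_iff)

lemma slide_invariant_step:
  assumes "valid_move c (i, j)" and "slide_invariant m t c"
  shows "slide_invariant m (t + of_bool (is_slide (i, j))) (apply_move c (i, j))"
  using assms(1)
proof (cases rule: valid_move_cases)
  case (slide_right a X b)
  then have "Empty \<notin> set a" "Empty \<notin> set b"
    using assms(2) single_vacancy_split[of "a @ [X]" b] by (auto simp: slide_invariant_def)
  then have "right_of_vacancy c = length b" "right_of_vacancy (apply_move c (i, j)) = Suc (length b)"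
    using right_of_vacancy_eq[of b "a @ [X]"] right_of_vacancy_eq[of "X # b" a] slide_right
    by simp_all
  then show ?thesis
    using slide_right assms(2) slide_bound_mono[of m t _ "Suc t"]
    by (simp add: slide_invariant_def is_slide_def dist_def)
next
  case (slide_left a X b)
  then have "Empty \<notin> set a" "Empty \<notin> set b"
    using assms(2) single_vacancy_split[of a "X # b"] by (auto simp: slide_invariant_def)
  then have "right_of_vacancy c = Suc (length b)" "right_of_vacancy (apply_move c (i, j)) = length b"
    using right_of_vacancy_eq[of b "a @ [X]"] right_of_vacancy_eq[of "X # b" a] slide_left
    by simp_all
  then show ?thesis
    using slide_left assms(2) slide_bound_mono[of m t _ "Suc t"]
    by (simp add: slide_invariant_def is_slide_def dist_def)
next
  case (jump_right a X Z b)
  then have "Empty \<notin> set a" "Empty \<notin> set b"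
    using assms(2) single_vacancy_split[of "a @ [X, Z]" b] by (auto simp: slide_invariant_def)
  then have "right_of_vacancy c = length b"
    "right_of_vacancy (apply_move c (i, j)) = Suc (Suc (length b))"
    using right_of_vacancy_eq[of b "a @ [X, Z]"] right_of_vacancy_eq[of "Z # X # b" a] jump_right
    by simp_all
  moreover have "slide_bound m t (pieces a @ Z # X # b)"
    using slide_bound_swap[of m t "pieces a" X Z b] assms(2) jump_right \<open>Empty \<notin> set b\<close> calculation
    by (simp add: slide_invariant_def pieces_id)
  ultimately show ?thesis
    using jump_right assms(2) \<open>Empty \<notin> set b\<close>
    by (simp add: slide_invariant_def is_slide_def dist_def pieces_id)
next
  case (jump_left a X Z b)
  then have "Empty \<notin> set a" "Empty \<notin> set b"
    using assms(2) single_vacancy_split[of a "Z # X # b"] by (auto simp: slide_invariant_def)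
  then have "right_of_vacancy c = Suc (Suc (length b))"
    "right_of_vacancy (apply_move c (i, j)) = length b"
    using right_of_vacancy_eq[of b "a @ [X, Z]"] right_of_vacancy_eq[of "Z # X # b" a] jump_left
    by simp_all
  moreover have "slide_bound m t (pieces a @ X # Z # b)"
    using slide_bound_swap[of m t "pieces a" Z X b] assms(2) jump_left \<open>Empty \<notin> set b\<close> calculation
    by (simp add: slide_invariant_def pieces_id)
  ultimately show ?thesis
    using jump_left assms(2) \<open>Empty \<notin> set b\<close>
    by (simp add: slide_invariant_def is_slide_def dist_def pieces_id)
qed

lemma slide_invariant_run:
  "legal_from c mvs \<Longrightarrow> slide_invariant m t c \<Longrightarrow> slide_invariant m (t + slides mvs) (run c mvs)"
proof (induction mvs arbitrary: c t)
  case (Cons mv mvs)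
  obtain i j where mv: "mv = (i, j)" by fastforce
  with Cons.prems have "slide_invariant m (t + of_bool (is_slide mv)) (apply_move c mv)"
    using slide_invariant_step by auto
  with Cons.IH Cons.prems(1) show ?case
    by (fastforce simp: slides_def)
qed (simp add: slides_def)

lemma slide_invariant_initial: "slide_invariant m 0 (initial n m)"
proof -
  have "slide_bound m 0 (replicate n Black @ replicate m White)"
    unfolding slide_bound_def
    by (auto simp: suffix_append dest!: set_mono_suffix)
  then show ?thesis
    using right_of_vacancy_eq[of "replicate m White" "replicate n Black"]
    by (simp add: slide_invariant_def initial_def pieces_id)
qed

lemma slide_invariant_final:
  assumes "n \<ge> 1" "m \<ge> 1" and "slide_invariant m t (final n m)"
  shows "n + m \<le> t"
proof -
  have "even (t + m + n)" and "slide_bound m t (replicate m White @ replicate n Black)"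
    using assms(3) right_of_vacancy_eq[of "replicate n Black" "replicate m White"]
    by (simp_all add: slide_invariant_def final_def pieces_id)
  then have "n + m \<le> t + 1"
    using assms(1,2) unfolding slide_bound_def by (force simp: suffix_def)
  with \<open>even (t + m + n)\<close> show ?thesis
    by presburger
qed

lemma solution_slides_ge:
  "n \<ge> 1 \<Longrightarrow> m \<ge> 1 \<Longrightarrow> solution n m mvs \<Longrightarrow> n + m \<le> slides mvs"
  using slide_invariant_final slide_invariant_run[OF _ slide_invariant_initial]
  unfolding solution_def by fastforce

inductive allowed_step :: "config \<Rightarrow> config \<Rightarrow> bool" where
  black_slide: "allowed_step (a @ Black # Empty # b) (a @ Empty # Black # b)"
| white_slide: "allowed_step (a @ Empty # White # b) (a @ White # Empty # b)"
| black_jump: "allowed_step (a @ Black # White # Empty # b) (a @ Empty # White # Black # b)"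
| white_jump: "allowed_step (a @ Empty # Black # White # b) (a @ White # Black # Empty # b)"

lemma allowed_step_move:
  assumes "allowed_step c d"
  shows "\<exists>mv. valid_move c mv \<and> allowed_kind c mv \<and> apply_move c mv = d"
  using assms
proof cases
  case (black_slide a b)
  then show ?thesis
    by (intro exI[of _ "(length a, Suc (length a))"])
      (simp add: valid_move_def allowed_kind_def nth_append dist_def apply_move_slide_right)
next
  case (white_slide a b)
  then show ?thesis
    by (intro exI[of _ "(Suc (length a), length a)"])
      (simp add: valid_move_def allowed_kind_def nth_append dist_def apply_move_slide_left)
next
  case (black_jump a b)
  then show ?thesis
    by (intro exI[of _ "(length a, Suc (Suc (length a)))"])
      (simp add: valid_move_def allowed_kind_def nth_append dist_def apply_move_jump_right)
next
  case (white_jump a b)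
  then show ?thesis
    by (intro exI[of _ "(Suc (Suc (length a)), length a)"])
      (simp add: valid_move_def allowed_kind_def nth_append dist_def apply_move_jump_left)
qed

lemma allowed_steps_run:
  assumes "allowed_step\<^sup>*\<^sup>* c d"
  shows "\<exists>mvs. legal_from c mvs \<and> all_moves_allowed c mvs \<and> run c mvs = d"
  using assms
proof (induction rule: converse_rtranclp_induct)
  case base
  show ?case by (intro exI[of _ "[]"]) simp
next
  case (step c c')
  then obtain mv mvs where "valid_move c mv" "allowed_kind c mv" "apply_move c mv = c'"
    "legal_from c' mvs" "all_moves_allowed c' mvs" "run c' mvs = d"
    using allowed_step_move by blast
  then show ?case by (intro exI[of _ "mv # mvs"]) simp
qed

definition swap_colour :: "cell \<Rightarrow> cell" where
  "swap_colour x = (case x of Black \<Rightarrow> White | White \<Rightarrow> Black | Empty \<Rightarrow> Empty)"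

definition mirror :: "config \<Rightarrow> config" where
  "mirror c = rev (map swap_colour c)"

lemma mirror_simps [simp]:
  "mirror [] = []" "mirror (xs @ ys) = mirror ys @ mirror xs"
  "mirror (x # xs) = mirror xs @ [swap_colour x]"
  "mirror (replicate k x) = replicate k (swap_colour x)"
  by (simp_all add: mirror_def)

lemma allowed_step_mirror: "allowed_step c d \<Longrightarrow> allowed_step (mirror c) (mirror d)"
proof (induction rule: allowed_step.induct)
  case (black_slide a b)
  then show ?case
    using allowed_step.white_slide[of "mirror b" "mirror a"] by (simp add: swap_colour_def)
next
  case (white_slide a b)
  then show ?case
    using allowed_step.black_slide[of "mirror b" "mirror a"] by (simp add: swap_colour_def)
next
  case (black_jump a b)
  then show ?case
    using allowed_step.white_jump[of "mirror b" "mirror a"] by (simp add: swap_colour_def)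
next
  case (white_jump a b)
  then show ?case
    using allowed_step.black_jump[of "mirror b" "mirror a"] by (simp add: swap_colour_def)
qed

lemma allowed_steps_mirror:
  "allowed_step\<^sup>*\<^sup>* c d \<Longrightarrow> allowed_step\<^sup>*\<^sup>* (mirror c) (mirror d)"
  by (induction rule: rtranclp_induct) (auto intro: rtranclp.rtrancl_into_rtrancl allowed_step_mirror)

abbreviation blacks :: "nat \<Rightarrow> config" where
  "blacks k \<equiv> replicate k Black"

abbreviation whites :: "nat \<Rightarrow> config" where
  "whites k \<equiv> replicate k White"

definition pairs :: "nat \<Rightarrow> cell \<Rightarrow> cell \<Rightarrow> config" where
  "pairs k x y = concat (replicate k [x, y])"

lemma pairs_0 [simp]: "pairs 0 x y = []"
  and pairs_Suc [simp]: "pairs (Suc k) x y = x # y # pairs k x y"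
  by (simp_all add: pairs_def)

lemma pairs_Suc_snoc: "pairs (Suc k) x y = pairs k x y @ [x, y]"
  by (induction k) simp_all

lemma Cons_pairs: "x # pairs k y x @ zs = pairs k x y @ x # zs"
  by (induction k) simp_all

lemma mirror_pairs [simp]: "mirror (pairs k White Black) = pairs k White Black"
  by (induction k) (simp_all add: swap_colour_def flip: pairs_Suc_snoc)

lemma white_jumps_sweep:
  "allowed_step\<^sup>*\<^sup>* (u @ Empty # pairs k Black White @ v) (u @ pairs k White Black @ Empty # v)"
proof (induction k arbitrary: u)
  case (Suc k)
  have "allowed_step (u @ Empty # pairs (Suc k) Black White @ v)
      ((u @ [White, Black]) @ Empty # pairs k Black White @ v)"
    using white_jump[of u "pairs k Black White @ v"] by simp
  also have "allowed_step\<^sup>*\<^sup>* \<dots> ((u @ [White, Black]) @ pairs k White Black @ Empty # v)"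
    by (rule Suc.IH)
  finally show ?case by simp
qed simp

definition zigzag :: "nat \<Rightarrow> nat \<Rightarrow> nat \<Rightarrow> nat \<Rightarrow> nat \<Rightarrow> config" where
  "zigzag x y k z w = whites x @ blacks y @ Empty # pairs k White Black @ whites z @ blacks w"

definition sorted_config :: "nat \<Rightarrow> nat \<Rightarrow> config" where
  "sorted_config a b = whites a @ Empty # blacks b"

lemma mirror_sorted_config [simp]: "mirror (sorted_config a b) = sorted_config b a"
  by (simp add: sorted_config_def swap_colour_def)

lemma mirror_zigzag:
  "mirror (zigzag x y k z w) = whites w @ blacks z @ pairs k White Black @ Empty # whites y @ blacks x"
  by (simp add: zigzag_def swap_colour_def)

lemma zigzag_step_black_white:
  "allowed_step\<^sup>*\<^sup>* (zigzag x (Suc y) k (Suc z) w) (mirror (zigzag w z (Suc k) y x))"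
proof -
  have "allowed_step (zigzag x (Suc y) k (Suc z) w)
      ((whites x @ blacks y) @ Empty # pairs (Suc k) Black White @ whites z @ blacks w)"
    using black_slide[of "whites x @ blacks y" "pairs k White Black @ White # whites z @ blacks w"]
    by (simp add: zigzag_def replicate_app_Cons_same Cons_pairs pairs_Suc_snoc)
  also have "allowed_step\<^sup>*\<^sup>* \<dots>
      ((whites x @ blacks y) @ pairs (Suc k) White Black @ Empty # whites z @ blacks w)"
    by (rule white_jumps_sweep)
  finally show ?thesis by (simp add: mirror_zigzag)
qed

lemma zigzag_step_black_black:
  "allowed_step\<^sup>*\<^sup>* (zigzag x (Suc y) k 0 w) (mirror (zigzag (Suc w) 0 k y x))"
proof -
  have "allowed_step (zigzag x (Suc y) k 0 w)
      ((whites x @ blacks y) @ Empty # pairs k Black White @ Black # blacks w)"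
    using black_slide[of "whites x @ blacks y" "pairs k White Black @ blacks w"]
    by (simp add: zigzag_def replicate_app_Cons_same Cons_pairs)
  also have "allowed_step\<^sup>*\<^sup>* \<dots>
      ((whites x @ blacks y) @ pairs k White Black @ Empty # Black # blacks w)"
    by (rule white_jumps_sweep)
  finally show ?thesis by (simp add: mirror_zigzag)
qed

lemma zigzag_step_white_white:
  "allowed_step\<^sup>*\<^sup>* (zigzag x 0 (Suc k) (Suc z) w) (mirror (zigzag w z (Suc k) 0 (Suc x)))"
proof -
  have "allowed_step (zigzag x 0 (Suc k) (Suc z) w)
      (whites (Suc x) @ Empty # pairs (Suc k) Black White @ whites z @ blacks w)"
    using white_slide[of "whites x" "Black # pairs k White Black @ White # whites z @ blacks w"]
    by (simp add: zigzag_def replicate_app_Cons_same Cons_pairs pairs_Suc_snoc)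
  also have "allowed_step\<^sup>*\<^sup>* \<dots>
      (whites (Suc x) @ pairs (Suc k) White Black @ Empty # whites z @ blacks w)"
    by (rule white_jumps_sweep)
  finally show ?thesis by (simp add: mirror_zigzag)
qed

lemma zigzag_step_white_black:
  "allowed_step\<^sup>*\<^sup>* (zigzag x 0 (Suc k) 0 w) (mirror (zigzag (Suc w) 0 k 0 (Suc x)))"
proof -
  have "allowed_step (zigzag x 0 (Suc k) 0 w)
      (whites (Suc x) @ Empty # pairs k Black White @ Black # blacks w)"
    using white_slide[of "whites x" "Black # pairs k White Black @ blacks w"]
    by (simp add: zigzag_def replicate_app_Cons_same Cons_pairs)
  also have "allowed_step\<^sup>*\<^sup>* \<dots>
      (whites (Suc x) @ pairs k White Black @ Empty # Black # blacks w)"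
    by (rule white_jumps_sweep)
  finally show ?thesis by (simp add: mirror_zigzag)
qed

lemma zigzag_step_whites:
  "allowed_step (zigzag x 0 0 (Suc z) w) (zigzag (Suc x) 0 0 z w)"
  using white_slide[of "whites x" "whites z @ blacks w"]
  by (simp add: zigzag_def replicate_app_Cons_same)

text \<open>
  After a slide and a sweep of white jumps the vacancy sits behind the pairs; such
  configurations are mirror images of zigzags (\<open>mirror_zigzag\<close>), and mirroring preserves
  allowed moves, so the induction only ever leaves zigzag configurations.
\<close>

lemma zigzag_reaches_sorted:
  "allowed_step\<^sup>*\<^sup>* (zigzag x y k z w) (sorted_config (x + k + z) (y + k + w))"
proof (induction "y + k + z" arbitrary: x y k z w rule: less_induct)
  case less
  have IH: "allowed_step\<^sup>*\<^sup>* (zigzag x' y' k' z' w') (sorted_config (x' + k' + z') (y' + k' + w'))"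
    if "y' + k' + z' < y + k + z" for x' y' k' z' w'
    using less that by blast
  have mirrored: "allowed_step\<^sup>*\<^sup>* (mirror (zigzag x' y' k' z' w'))
      (sorted_config (y' + k' + w') (x' + k' + z'))"
    if "y' + k' + z' < y + k + z" for x' y' k' z' w'
    using allowed_steps_mirror[OF IH[OF that]] by simp
  consider (black_white) y' z' where "y = Suc y'" "z = Suc z'"
    | (black_black) y' where "y = Suc y'" "z = 0"
    | (white_white) k' z' where "y = 0" "k = Suc k'" "z = Suc z'"
    | (white_black) k' where "y = 0" "k = Suc k'" "z = 0"
    | (whites_only) z' where "y = 0" "k = 0" "z = Suc z'"
    | (base) "y = 0" "k = 0" "z = 0"
    by (metis not0_implies_Suc)
  then show ?case
  proof cases
    case (black_white y' z')
    then show ?thesis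
      using rtranclp_trans[OF zigzag_step_black_white
          mirrored[where x'=w and y'=z' and k'="Suc k" and z'=y' and w'=x]]
      by (simp add: ac_simps)
  next
    case (black_black y')
    then show ?thesis
      using rtranclp_trans[OF zigzag_step_black_black
          mirrored[where x'="Suc w" and y'=0 and k'=k and z'=y' and w'=x]]
      by (simp add: ac_simps)
  next
    case (white_white k' z')
    then show ?thesis
      using rtranclp_trans[OF zigzag_step_white_white
          mirrored[where x'=w and y'=z' and k'="Suc k'" and z'=0 and w'="Suc x"]]
      by (simp add: ac_simps)
  next
    case (white_black k')
    then show ?thesis
      using rtranclp_trans[OF zigzag_step_white_black
          mirrored[where x'="Suc w" and y'=0 and k'=k' and z'=0 and w'="Suc x"]]
      by (simp add: ac_simps)
  next
    case (whites_only z')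
    then show ?thesis
      using converse_rtranclp_into_rtranclp[OF zigzag_step_whites
          IH[where x'="Suc x" and y'=0 and k'=0 and z'=z' and w'=w]]
      by simp
  next
    case base
    then show ?thesis
      by (simp add: zigzag_def sorted_config_def)
  qed
qed

lemma progress_final_initial:
  "progress (final n m) = progress (initial n m) + int (n * m + n + m)"
  by (simp add: progress_def final_def initial_def charge_def sum_list_replicate algebra_simps)

lemma potential_final_initial:
  "potential (final n m) = potential (initial n m) + 4 * int (n * m) + int n + int m"
  by (simp add: potential_def final_def initial_def charge_def sum_list_replicate algebra_simps)

lemma solution_of_length_exists:
  "\<exists>mvs. solution n m mvs \<and> length mvs = n * m + n + m"
proof -
  have "allowed_step\<^sup>*\<^sup>* (initial n m) (final n m)"
    using zigzag_reaches_sorted[of 0 n 0 m 0]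
    by (simp add: zigzag_def sorted_config_def initial_def final_def)
  then obtain mvs where legal: "legal_from (initial n m) mvs"
    and allowed: "all_moves_allowed (initial n m) mvs" and final: "run (initial n m) mvs = final n m"
    using allowed_steps_run by blast
  have "int (length mvs) = int (n * m + n + m)"
    using allowed_run_progress[OF legal allowed] progress_final_initial[of n m] final by simp
  then have "length mvs = n * m + n + m"
    by (simp only: of_nat_eq_iff)
  then show ?thesis
    using legal final unfolding solution_def by blast
qed

theorem lemma1:
  fixes n m :: nat and mvs :: "move list"
  assumes "n \<ge> 1" and "m \<ge> 1"
    and "optimal_solution n m mvs"
  shows "all_moves_allowed (initial n m) mvs"
proof -
  have sol: "solution n m mvs" and legal: "legal_from (initial n m) mvs"
    and final: "run (initial n m) mvs = final n m"
    using assms(3) unfolding optimal_solution_def solution_def by auto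
  have "length mvs \<le> n * m + n + m"
    using assms(3) solution_of_length_exists unfolding optimal_solution_def by fastforce
  moreover have "n + m \<le> slides mvs"
    using solution_slides_ge[OF assms(1,2) sol] .
  ultimately have "4 * int (length mvs)
      \<le> potential (run (initial n m) mvs) - potential (initial n m) + 3 * int (slides mvs)"
    unfolding final potential_final_initial by linarith
  then show ?thesis
    using legal_run_gain_ge_imp_allowed[OF legal] by blast
qed

end
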